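(* Let $n\ge2$, $\omega\in\mathbb{R}^n$, $k\in\mathbb{R}_{>0}^n$ satisfy (IC1) $\sum_\mu\omega_\mu=0$, (IC2) $\omega\ne0$, (IC3) $\left|\frac{\omega_1}{k_1}\right|\le\cdots\le\left|\frac{\omega_n}{k_n}\right|$. Let $\sigma\in\{-1,+1\}^n$ and $f_\sigma(R)=-R+\frac1n\sum_{\mu=1}^n\sigma_\mu\sqrt{k_\mu^2R-\omega_\mu^2}$. If $s_\ell=\sum_{\mu=1}^\ell\sigma_\mu k_\mu\le0$ for all $\ell=1,\ldots,n$, then $f_\sigma$ has no positive roots.
   Context: Square roots are nonnegative real square roots; a positive root of $f_\sigma$ is a real $R>0$ with $k_\mu^2R-\omega_\mu^2\ge0$ for all $\mu$ and $f_\sigma(R)=0$. *)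

theory Defs
  imports Complex_Main
begin

definition f_sigma :: "nat \<Rightarrow> (nat \<Rightarrow> real) \<Rightarrow> (nat \<Rightarrow> real) \<Rightarrow> (nat \<Rightarrow> real) \<Rightarrow> real \<Rightarrow> real" where
  "f_sigma n \<sigma> k \<omega> R = - R + (1 / real n) * (\<Sum>\<mu>=1..n. \<sigma> \<mu> * sqrt ((k \<mu>)\<^sup>2 * R - (\<omega> \<mu>)\<^sup>2))"

definition positive_root :: "nat \<Rightarrow> (nat \<Rightarrow> real) \<Rightarrow> (nat \<Rightarrow> real) \<Rightarrow> (nat \<Rightarrow> real) \<Rightarrow> real \<Rightarrow> bool" where
  "positive_root n \<sigma> k \<omega> R \<longleftrightarrow> R > 0 \<and> (\<forall>\<mu>\<in>{1..n}. (k \<mu>)\<^sup>2 * R - (\<omega> \<mu>)\<^sup>2 \<ge> 0) \<and> f_sigma n \<sigma> k \<omega> R = 0"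

end

theory Submission
  imports Defs
begin

text \<open>Writing \<open>\<sigma>\<^sub>\<mu> sqrt (k\<^sub>\<mu>\<^sup>2 R - \<omega>\<^sub>\<mu>\<^sup>2) = (\<sigma>\<^sub>\<mu> k\<^sub>\<mu>) g\<^sub>\<mu>\<close> with
  \<open>g\<^sub>\<mu> = sqrt (R - (\<omega>\<^sub>\<mu>/k\<^sub>\<mu>)\<^sup>2)\<close>, condition (IC3) makes \<open>g\<close> decreasing. Abel summation
  against the nonpositive partial sums \<open>s\<^sub>\<ell>\<close> bounds the sum in \<open>f\<^sub>\<sigma>(R)\<close> by
  \<open>s\<^sub>n g\<^sub>n \<le> 0\<close>, so \<open>f\<^sub>\<sigma>(R) \<le> -R < 0\<close>.\<close>

lemma sum_mult_antimono_le_partial_sum: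
  fixes c g :: "nat \<Rightarrow> 'a::linordered_idom"
  assumes "\<And>\<mu>. 1 \<le> \<mu> \<Longrightarrow> \<mu> < m \<Longrightarrow> g (Suc \<mu>) \<le> g \<mu>"
    and "\<And>l. 1 \<le> l \<Longrightarrow> l \<le> m \<Longrightarrow> (\<Sum>\<mu>=1..l. c \<mu>) \<le> 0"
  shows "(\<Sum>\<mu>=1..m. c \<mu> * g \<mu>) \<le> (\<Sum>\<mu>=1..m. c \<mu>) * g m"
  using assms
proof (induction m)
  case 0
  then show ?case by simp
next
  case (Suc m)
  show ?case
  proof (cases "m = 0")
    case True
    then show ?thesis by simp
  next
    case False
    have IH: "(\<Sum>\<mu>=1..m. c \<mu> * g \<mu>) \<le> (\<Sum>\<mu>=1..m. c \<mu>) * g m"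
      using Suc by simp
    have "(\<Sum>\<mu>=1..m. c \<mu>) * g m \<le> (\<Sum>\<mu>=1..m. c \<mu>) * g (Suc m)"
      using Suc.prems False by (simp add: mult_left_mono_neg)
    with IH have "(\<Sum>\<mu>=1..Suc m. c \<mu> * g \<mu>)
        \<le> (\<Sum>\<mu>=1..m. c \<mu>) * g (Suc m) + c (Suc m) * g (Suc m)"
      by simp
    also have "\<dots> = (\<Sum>\<mu>=1..Suc m. c \<mu>) * g (Suc m)"
      by (simp add: algebra_simps)
    finally show ?thesis .
  qed
qed

lemma sqrt_radicand_factor:
  fixes k \<omega> R :: real
  assumes "k > 0"
  shows "sqrt (k\<^sup>2 * R - \<omega>\<^sup>2) = k * sqrt (R - (\<omega> / k)\<^sup>2)"
proof -
  have "k\<^sup>2 * R - \<omega>\<^sup>2 = k\<^sup>2 * (R - (\<omega> / k)\<^sup>2)"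
    using assms by (simp add: field_simps)
  then show ?thesis
    using assms by (simp add: real_sqrt_mult)
qed

lemma f_sigma_neg:
  fixes n :: nat and \<omega> k \<sigma> :: "nat \<Rightarrow> real"
  assumes "n \<ge> 1"
    and kpos: "\<forall>\<mu>\<in>{1..n}. k \<mu> > 0"
    and IC3: "\<forall>\<mu>\<in>{1..<n}. \<bar>\<omega> \<mu> / k \<mu>\<bar> \<le> \<bar>\<omega> (\<mu>+1) / k (\<mu>+1)\<bar>"
    and s_nonpos: "\<forall>l\<in>{1..n}. (\<Sum>\<mu>=1..l. \<sigma> \<mu> * k \<mu>) \<le> 0"
    and "R > 0"
    and rad: "\<forall>\<mu>\<in>{1..n}. (k \<mu>)\<^sup>2 * R - (\<omega> \<mu>)\<^sup>2 \<ge> 0"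
  shows "f_sigma n \<sigma> k \<omega> R < 0"
proof -
  define g where "g \<mu> = sqrt (R - (\<omega> \<mu> / k \<mu>)\<^sup>2)" for \<mu>
  have g_antimono: "g (Suc \<mu>) \<le> g \<mu>" if "1 \<le> \<mu>" "\<mu> < n" for \<mu>
  proof -
    have "\<bar>\<omega> \<mu> / k \<mu>\<bar> \<le> \<bar>\<omega> (Suc \<mu>) / k (Suc \<mu>)\<bar>"
      using IC3 that by auto
    then have "(\<omega> \<mu> / k \<mu>)\<^sup>2 \<le> (\<omega> (Suc \<mu>) / k (Suc \<mu>))\<^sup>2"
      by (metis abs_ge_zero power2_abs power_mono)
    then show ?thesis
      unfolding g_def by simp
  qed
  have n_mem: "n \<in> {1..n}"
    using assms(1) by simp
  have k_n: "k n > 0"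
    using kpos n_mem by blast
  have "0 \<le> sqrt ((k n)\<^sup>2 * R - (\<omega> n)\<^sup>2)"
    using rad n_mem by simp
  then have g_n: "g n \<ge> 0"
    using k_n by (simp add: g_def sqrt_radicand_factor zero_le_mult_iff)
  have "(\<Sum>\<mu>=1..n. \<sigma> \<mu> * sqrt ((k \<mu>)\<^sup>2 * R - (\<omega> \<mu>)\<^sup>2)) = (\<Sum>\<mu>=1..n. (\<sigma> \<mu> * k \<mu>) * g \<mu>)"
    using kpos by (intro sum.cong) (simp_all add: g_def sqrt_radicand_factor)
  also have "\<dots> \<le> (\<Sum>\<mu>=1..n. \<sigma> \<mu> * k \<mu>) * g n"
    using s_nonpos g_antimono by (intro sum_mult_antimono_le_partial_sum) auto
  also have "\<dots> \<le> 0"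
    using s_nonpos n_mem g_n by (simp add: mult_nonpos_nonneg)
  finally have "(1 / real n) * (\<Sum>\<mu>=1..n. \<sigma> \<mu> * sqrt ((k \<mu>)\<^sup>2 * R - (\<omega> \<mu>)\<^sup>2)) \<le> 0"
    by (simp add: divide_nonpos_nonneg)
  then show ?thesis
    unfolding f_sigma_def using \<open>R > 0\<close> by linarith
qed

theorem proposition2:
  fixes n :: nat and \<omega> k \<sigma> :: "nat \<Rightarrow> real"
  assumes n2: "n \<ge> 2"
    and kpos: "\<forall>\<mu>\<in>{1..n}. k \<mu> > 0"
    and IC1: "(\<Sum>\<mu>=1..n. \<omega> \<mu>) = 0"
    and IC2: "\<exists>\<mu>\<in>{1..n}. \<omega> \<mu> \<noteq> 0"
    and IC3: "\<forall>\<mu>\<in>{1..<n}. \<bar>\<omega> \<mu> / k \<mu>\<bar> \<le> \<bar>\<omega> (\<mu>+1) / k (\<mu>+1)\<bar>"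
    and sigma: "\<forall>\<mu>\<in>{1..n}. \<sigma> \<mu> = -1 \<or> \<sigma> \<mu> = 1"
    and s_nonpos: "\<forall>l\<in>{1..n}. (\<Sum>\<mu>=1..l. \<sigma> \<mu> * k \<mu>) \<le> 0"
  shows "\<not> (\<exists>R. positive_root n \<sigma> k \<omega> R)"
  using f_sigma_neg[OF _ kpos IC3 s_nonpos] n2 unfolding positive_root_def by force

end
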